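(* Let $n\ge 2$ and let $X\subset\mathbb{P}^n$ be a hypersurface over $\mathbb{F}_q$ that contains at least one $\mathbb{F}_q$-point at which $X$ is smooth and satisfies $\#X(\mathbb{F}_q)\geq \#\mathbb{P}^n(\mathbb{F}_q)-1$. Then $\deg(X)\geq q+1$. *)

theory Defs
  imports Main
begin

text \<open>Polynomials in the n+1 variables x_0..x_n over a field, represented by their
coefficient function on exponent vectors (alpha :: nat => nat).\<close>

definition exps :: "nat \<Rightarrow> (nat \<Rightarrow> nat) set" where
  "exps n = {\<alpha>. \<forall>i>n. \<alpha> i = 0}"

definition supp :: "((nat \<Rightarrow> nat) \<Rightarrow> 'a::zero) \<Rightarrow> (nat \<Rightarrow> nat) set" where
  "supp c = {\<alpha>. c \<alpha> \<noteq> 0}"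

definition is_poly :: "nat \<Rightarrow> ((nat \<Rightarrow> nat) \<Rightarrow> 'a::zero) \<Rightarrow> bool" where
  "is_poly n c \<longleftrightarrow> finite (supp c) \<and> supp c \<subseteq> exps n"

definition peval :: "nat \<Rightarrow> ((nat \<Rightarrow> nat) \<Rightarrow> 'a::comm_ring_1) \<Rightarrow> (nat \<Rightarrow> 'a) \<Rightarrow> 'a" where
  "peval n c x = (\<Sum>\<alpha>\<in>supp c. c \<alpha> * (\<Prod>i\<le>n. x i ^ \<alpha> i))"

definition pderiv_var :: "nat \<Rightarrow> ((nat \<Rightarrow> nat) \<Rightarrow> 'a::comm_ring_1) \<Rightarrow> (nat \<Rightarrow> nat) \<Rightarrow> 'a" where
  "pderiv_var i c \<alpha> = of_nat (\<alpha> i + 1) * c (\<alpha>(i := \<alpha> i + 1))"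

definition hypersurface :: "nat \<Rightarrow> nat \<Rightarrow> ((nat \<Rightarrow> nat) \<Rightarrow> 'a::zero) \<Rightarrow> bool" where
  "hypersurface n d c \<longleftrightarrow> is_poly n c \<and> supp c \<noteq> {} \<and> d \<ge> 1 \<and>
     (\<forall>\<alpha>\<in>supp c. (\<Sum>i\<le>n. \<alpha> i) = d)"

definition nzvecs :: "nat \<Rightarrow> (nat \<Rightarrow> 'a::field) set" where
  "nzvecs n = {x. (\<forall>i>n. x i = 0) \<and> (\<exists>i\<le>n. x i \<noteq> 0)}"

definition proj_rel :: "nat \<Rightarrow> ((nat \<Rightarrow> 'a::field) \<times> (nat \<Rightarrow> 'a)) set" where
  "proj_rel n = {(x, y). x \<in> nzvecs n \<and> y \<in> nzvecs n \<and> (\<exists>t. t \<noteq> 0 \<and> y = (\<lambda>i. t * x i))}"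

definition proj_space :: "nat \<Rightarrow> (nat \<Rightarrow> 'a::field) set set" where
  "proj_space n = nzvecs n // proj_rel n"

definition rat_points :: "nat \<Rightarrow> ((nat \<Rightarrow> nat) \<Rightarrow> 'a::field) \<Rightarrow> (nat \<Rightarrow> 'a) set set" where
  "rat_points n c = {P \<in> proj_space n. \<forall>x\<in>P. peval n c x = 0}"

text \<open>Smoothness at a point (Jacobian criterion): some partial derivative does not vanish.\<close>
definition smooth_at :: "nat \<Rightarrow> ((nat \<Rightarrow> nat) \<Rightarrow> 'a::field) \<Rightarrow> (nat \<Rightarrow> 'a) set \<Rightarrow> bool" where
  "smooth_at n c P \<longleftrightarrow> (\<forall>x\<in>P. \<exists>i\<le>n. peval n (pderiv_var i c) x \<noteq> 0)"

end

theory Submission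
  imports Defs "HOL-Computational_Algebra.Polynomial"
begin

text \<open>Let F define X, let p be a smooth rational point and let m span the only possible rational
point off X. Every direction v outside the plane spanned by p and m gives a line p + t v whose
points all lie on X, and because n \<ge> 2 the direction can be chosen with \<nabla>F(p) \<cdot> v \<noteq> 0.
Then t \<mapsto> F(p + t v) is a polynomial that vanishes on all q elements of the field, is
nonzero (its linear coefficient is \<nabla>F(p) \<cdot> v) and has degree below d (its coefficient of
t^d is F(v) = 0, as v itself lies off the plane). Hence q < d.\<close>

lemma coeff_mult_at_degree_bounds:
  fixes f g :: "'a::comm_semiring_0 poly"
  assumes "degree f \<le> m" "degree g \<le> k"
  shows "coeff (f * g) (m + k) = coeff f m * coeff g k"
proof (cases "degree f = m \<and> degree g = k")
  case True
  then show ?thesis using coeff_mult_degree_sum[of f g] by simp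
next
  case False
  then have "degree (f * g) < m + k" "coeff f m = 0 \<or> coeff g k = 0"
    using assms degree_mult_le[of f g] by (auto simp: coeff_eq_0)
  then show ?thesis by (auto simp: coeff_eq_0)
qed

lemma coeff_prod_at_degree_bounds:
  fixes f :: "'i \<Rightarrow> 'a::comm_semiring_1 poly"
  assumes "finite I" "\<And>i. i \<in> I \<Longrightarrow> degree (f i) \<le> k i"
  shows "coeff (\<Prod>i\<in>I. f i) (\<Sum>i\<in>I. k i) = (\<Prod>i\<in>I. coeff (f i) (k i))"
  using assms
proof (induction I rule: finite_induct)
  case (insert j I)
  have "degree (\<Prod>i\<in>I. f i) \<le> (\<Sum>i\<in>I. degree (f i))"
    using degree_prod_sum_le[OF insert(1), of f] by simp
  also have "\<dots> \<le> (\<Sum>i\<in>I. k i)"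
    using insert(4) by (intro sum_mono) auto
  finally have "degree (\<Prod>i\<in>I. f i) \<le> (\<Sum>i\<in>I. k i)" .
  then show ?case using insert by (simp add: coeff_mult_at_degree_bounds)
qed simp

lemma degree_linear_power_le: "degree ([:a, b:] ^ k) \<le> k"
  using degree_power_le[of "[:a, b:]" k] degree_pCons_le[of a "[:b:]"]
  by (auto intro: order_trans)

lemma coeff_linear_power_degree: "coeff ([:a, b::'a::comm_semiring_1:] ^ k) k = b ^ k"
proof (induction k)
  case (Suc k)
  have "coeff ([:a, b:] * [:a, b:] ^ k) (1 + k) = coeff [:a, b:] 1 * coeff ([:a, b:] ^ k) k"
    by (rule coeff_mult_at_degree_bounds) (auto simp: degree_linear_power_le degree_pCons_le)
  with Suc show ?case by simp
qed simp

lemma inj_on_fun_upd_decrement: "inj_on (\<lambda>\<alpha>::'a \<Rightarrow> nat. \<alpha>(j := \<alpha> j - 1)) {\<alpha>. 0 < \<alpha> j}"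
proof (rule inj_onI)
  fix \<alpha> \<beta> :: "'a \<Rightarrow> nat"
  assume "\<alpha> \<in> {\<alpha>. 0 < \<alpha> j}" "\<beta> \<in> {\<alpha>. 0 < \<alpha> j}" and eq: "\<alpha>(j := \<alpha> j - 1) = \<beta>(j := \<beta> j - 1)"
  moreover have "\<alpha> j - 1 = \<beta> j - 1"
    using fun_cong[OF eq, of j] by simp
  ultimately have "\<alpha> j = \<beta> j" by simp
  have "\<alpha> = (\<alpha>(j := \<alpha> j - 1))(j := \<alpha> j)" by simp
  also have "\<dots> = (\<beta>(j := \<beta> j - 1))(j := \<beta> j)" using eq \<open>\<alpha> j = \<beta> j\<close> by simp
  also have "\<dots> = \<beta>" by simp
  finally show "\<alpha> = \<beta>" .
qed

lemma peval_pderiv_var: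
  fixes c :: "(nat \<Rightarrow> nat) \<Rightarrow> 'a::comm_ring_1"
  assumes "is_poly n c" "j \<le> n"
  shows "peval n (pderiv_var j c) x =
    (\<Sum>\<alpha>\<in>supp c. c \<alpha> * (of_nat (\<alpha> j) * x j ^ (\<alpha> j - 1) * (\<Prod>i\<in>{..n}-{j}. x i ^ \<alpha> i)))"
proof -
  define A where "A = {\<alpha>\<in>supp c. 0 < \<alpha> j}"
  define lower where "lower = (\<lambda>\<alpha>::nat \<Rightarrow> nat. \<alpha>(j := \<alpha> j - 1))"
  have fin: "finite (supp c)" using assms(1) by (simp add: is_poly_def)
  have "inj_on lower A"
    unfolding lower_def A_def by (rule inj_on_subset[OF inj_on_fun_upd_decrement]) blast
  have "supp (pderiv_var j c) \<subseteq> lower ` A"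
  proof
    fix \<beta> assume "\<beta> \<in> supp (pderiv_var j c)"
    then have "\<beta>(j := \<beta> j + 1) \<in> A" by (auto simp: supp_def pderiv_var_def A_def)
    moreover have "\<beta> = lower (\<beta>(j := \<beta> j + 1))" by (simp add: lower_def)
    ultimately show "\<beta> \<in> lower ` A" by blast
  qed
  have mono: "(\<Prod>i\<le>n. x i ^ \<beta> i) = x j ^ \<beta> j * (\<Prod>i\<in>{..n}-{j}. x i ^ \<beta> i)" for \<beta>
    using assms(2) by (simp add: prod.remove)
  have "peval n (pderiv_var j c) x = (\<Sum>\<beta>\<in>lower ` A. pderiv_var j c \<beta> * (\<Prod>i\<le>n. x i ^ \<beta> i))"
    unfolding peval_def
    by (rule sum.mono_neutral_left) (use fin \<open>supp (pderiv_var j c) \<subseteq> lower ` A\<close> in \<open>auto simp: supp_def A_def\<close>)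
  also have "\<dots> = (\<Sum>\<alpha>\<in>A. pderiv_var j c (lower \<alpha>) * (\<Prod>i\<le>n. x i ^ lower \<alpha> i))"
    using \<open>inj_on lower A\<close> by (simp add: sum.reindex)
  also have "\<dots> = (\<Sum>\<alpha>\<in>A. c \<alpha> * (of_nat (\<alpha> j) * x j ^ (\<alpha> j - 1) * (\<Prod>i\<in>{..n}-{j}. x i ^ \<alpha> i)))"
  proof (rule sum.cong[OF refl])
    fix \<alpha> assume "\<alpha> \<in> A"
    then have "(lower \<alpha>)(j := lower \<alpha> j + 1) = \<alpha>" by (auto simp: lower_def A_def)
    moreover have "(\<Prod>i\<in>{..n}-{j}. x i ^ lower \<alpha> i) = (\<Prod>i\<in>{..n}-{j}. x i ^ \<alpha> i)"
      by (rule prod.cong) (auto simp: lower_def)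
    ultimately show "pderiv_var j c (lower \<alpha>) * (\<Prod>i\<le>n. x i ^ lower \<alpha> i) =
        c \<alpha> * (of_nat (\<alpha> j) * x j ^ (\<alpha> j - 1) * (\<Prod>i\<in>{..n}-{j}. x i ^ \<alpha> i))"
      using \<open>\<alpha> \<in> A\<close> unfolding mono pderiv_var_def by (simp add: lower_def A_def mult_ac)
  qed
  also have "\<dots> = (\<Sum>\<alpha>\<in>supp c. c \<alpha> * (of_nat (\<alpha> j) * x j ^ (\<alpha> j - 1) * (\<Prod>i\<in>{..n}-{j}. x i ^ \<alpha> i)))"
    by (rule sum.mono_neutral_left) (auto simp: fin A_def)
  finally show ?thesis .
qed

definition line_poly :: "nat \<Rightarrow> ((nat \<Rightarrow> nat) \<Rightarrow> 'a::comm_ring_1) \<Rightarrow> (nat \<Rightarrow> 'a) \<Rightarrow> (nat \<Rightarrow> 'a) \<Rightarrow> 'a poly" where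
  "line_poly n c p v = (\<Sum>\<alpha>\<in>supp c. smult (c \<alpha>) (\<Prod>i\<le>n. [:p i, v i:] ^ \<alpha> i))"

lemma poly_line_poly: "poly (line_poly n c p v) t = peval n c (\<lambda>i. p i + t * v i)"
  by (simp add: line_poly_def peval_def poly_sum poly_prod mult.commute)

lemma degree_line_poly_le:
  assumes "hypersurface n d c"
  shows "degree (line_poly n c p v) \<le> d"
  unfolding line_poly_def
proof (intro degree_sum_le degree_smult_le[THEN order_trans])
  fix \<alpha> assume "\<alpha> \<in> supp c"
  then have "(\<Sum>i\<le>n. \<alpha> i) = d" using assms by (simp add: hypersurface_def)
  have "degree (\<Prod>i\<le>n. [:p i, v i:] ^ \<alpha> i) \<le> (\<Sum>i\<le>n. degree ([:p i, v i:] ^ \<alpha> i))"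
    using degree_prod_sum_le[of "{..n}" "\<lambda>i. [:p i, v i:] ^ \<alpha> i"] by simp
  also have "\<dots> \<le> (\<Sum>i\<le>n. \<alpha> i)"
    by (intro sum_mono degree_linear_power_le)
  finally show "degree (\<Prod>i\<le>n. [:p i, v i:] ^ \<alpha> i) \<le> d" using \<open>(\<Sum>i\<le>n. \<alpha> i) = d\<close> by simp
qed (use assms in \<open>simp add: hypersurface_def is_poly_def\<close>)

lemma coeff_line_poly_degree:
  assumes "hypersurface n d c"
  shows "coeff (line_poly n c p v) d = peval n c v"
proof -
  have "coeff (\<Prod>i\<le>n. [:p i, v i:] ^ \<alpha> i) d = (\<Prod>i\<le>n. v i ^ \<alpha> i)" if "\<alpha> \<in> supp c" for \<alpha>
  proof -
    have "(\<Sum>i\<le>n. \<alpha> i) = d" using assms that by (simp add: hypersurface_def)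
    with coeff_prod_at_degree_bounds[of "{..n}" "\<lambda>i. [:p i, v i:] ^ \<alpha> i" \<alpha>]
    show ?thesis by (simp add: degree_linear_power_le coeff_linear_power_degree)
  qed
  then show ?thesis by (simp add: line_poly_def coeff_sum peval_def)
qed

lemma coeff_line_poly_1:
  fixes c :: "(nat \<Rightarrow> nat) \<Rightarrow> 'a::idom"
  assumes "is_poly n c"
  shows "coeff (line_poly n c p v) 1 = (\<Sum>j\<le>n. v j * peval n (pderiv_var j c) p)"
proof -
  have linear_coeff: "coeff q 1 = poly (pderiv q) 0" for q :: "'a poly"
    by (simp add: poly_0_coeff_0 coeff_pderiv)
  have "coeff (\<Prod>i\<le>n. [:p i, v i:] ^ \<alpha> i) 1 =
      (\<Sum>j\<le>n. v j * (of_nat (\<alpha> j) * p j ^ (\<alpha> j - 1) * (\<Prod>i\<in>{..n}-{j}. p i ^ \<alpha> i)))" for \<alpha>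
    unfolding linear_coeff
    by (simp add: pderiv_prod pderiv_power pderiv_pCons poly_sum poly_prod mult_ac)
  then have "coeff (line_poly n c p v) 1 = (\<Sum>\<alpha>\<in>supp c. c \<alpha> *
      (\<Sum>j\<le>n. v j * (of_nat (\<alpha> j) * p j ^ (\<alpha> j - 1) * (\<Prod>i\<in>{..n}-{j}. p i ^ \<alpha> i))))"
    by (simp add: line_poly_def coeff_sum)
  also have "\<dots> = (\<Sum>j\<le>n. v j * (\<Sum>\<alpha>\<in>supp c. c \<alpha> *
      (of_nat (\<alpha> j) * p j ^ (\<alpha> j - 1) * (\<Prod>i\<in>{..n}-{j}. p i ^ \<alpha> i))))"
    by (simp add: sum_distrib_left mult_ac sum.swap[of _ "supp c"])
  also have "\<dots> = (\<Sum>j\<le>n. v j * peval n (pderiv_var j c) p)"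
    using assms by (simp add: peval_pderiv_var)
  finally show ?thesis .
qed

lemma degree_gt_card_if_line_on_hypersurface:
  fixes c :: "(nat \<Rightarrow> nat) \<Rightarrow> 'a::{finite,field}"
  assumes "hypersurface n d c"
    and "(\<Sum>j\<le>n. v j * peval n (pderiv_var j c) p) \<noteq> 0"
    and "peval n c v = 0"
    and "\<And>t. peval n c (\<lambda>i. p i + t * v i) = 0"
  shows "d \<ge> card (UNIV :: 'a set) + 1"
proof -
  let ?H = "line_poly n c p v"
  have "coeff ?H 1 \<noteq> 0"
    using assms(1,2) coeff_line_poly_1[of n c] by (simp add: hypersurface_def)
  then have "?H \<noteq> 0" by auto
  moreover have "{t. poly ?H t = 0} = UNIV"
    using assms(4) by (simp add: poly_line_poly)
  ultimately have "card (UNIV :: 'a set) \<le> degree ?H"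
    using card_poly_roots_bound by fastforce
  moreover have "coeff ?H d = 0"
    using assms(1,3) by (simp add: coeff_line_poly_degree)
  then have "degree ?H \<noteq> d"
    using \<open>?H \<noteq> 0\<close> by auto
  ultimately show ?thesis
    using degree_line_poly_le[OF assms(1), of p v] by linarith
qed

definition vecs :: "nat \<Rightarrow> (nat \<Rightarrow> 'a::zero) set" where
  "vecs n = {x. \<forall>i>n. x i = 0}"

lemma bij_betw_vecs_lists: "bij_betw (\<lambda>x. map x [0..<Suc n]) (vecs n) {xs. length xs = Suc n}"
proof (rule bij_betw_byWitness[where f' = "\<lambda>xs i. if i < Suc n then xs ! i else 0"])
qed (auto simp: vecs_def fun_eq_iff not_less simp del: upt_Suc intro: nth_equalityI)

lemma card_vecs: "card (vecs n :: (nat \<Rightarrow> 'a::{finite,zero}) set) = card (UNIV :: 'a set) ^ Suc n"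
proof -
  have "card (vecs n :: (nat \<Rightarrow> 'a) set) = card {xs :: 'a list. length xs = Suc n}"
    by (rule bij_betw_same_card[OF bij_betw_vecs_lists])
  also have "\<dots> = card (UNIV :: 'a set) ^ Suc n"
    using card_lists_length_eq[of "UNIV :: 'a set" "Suc n"] by simp
  finally show ?thesis .
qed

lemma finite_vecs: "finite (vecs n :: (nat \<Rightarrow> 'a::{finite,zero}) set)"
  using bij_betw_finite[OF bij_betw_vecs_lists[where 'a = 'a]]
    finite_lists_length_eq[of "UNIV :: 'a set" "Suc n"]
  by simp

lemma nzvecs_eq: "nzvecs n = vecs n - {\<lambda>_. 0}"
  by (auto simp: nzvecs_def vecs_def fun_eq_iff) (meson not_le)

lemma finite_proj_space: "finite (proj_space n :: (nat \<Rightarrow> 'a::{finite,field}) set set)"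
  unfolding proj_space_def
  by (rule finite_quotient) (auto simp: nzvecs_eq finite_vecs proj_rel_def)

lemma proj_class_in_proj_space: "x \<in> nzvecs n \<Longrightarrow> proj_rel n `` {x} \<in> proj_space n"
  unfolding proj_space_def by (rule quotientI)

lemma self_in_proj_class: "x \<in> nzvecs n \<Longrightarrow> x \<in> proj_rel n `` {x}"
  unfolding proj_rel_def by (auto intro: exI[of _ 1])

lemma proj_space_elemE:
  assumes "P \<in> proj_space n"
  obtains x where "x \<in> nzvecs n" "x \<in> P" "P = proj_rel n `` {x}"
  using assms self_in_proj_class unfolding proj_space_def by (auto elim!: quotientE)

lemma smooth_rat_pointE:
  assumes "P \<in> rat_points n c" "smooth_at n c P"
  obtains p j where "p \<in> nzvecs n" "peval n c p = 0" "j \<le> n" "peval n (pderiv_var j c) p \<noteq> 0"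
proof -
  obtain x where "x \<in> nzvecs n" "x \<in> P"
    using assms(1) by (auto simp: rat_points_def elim: proj_space_elemE)
  moreover obtain j where "j \<le> n" "peval n (pderiv_var j c) x \<noteq> 0"
    using assms(2) \<open>x \<in> P\<close> by (auto simp: smooth_at_def)
  ultimately show thesis
    using that assms(1) by (auto simp: rat_points_def)
qed

lemma nonvanishing_vecs_are_multiples:
  fixes c :: "(nat \<Rightarrow> nat) \<Rightarrow> 'a::{finite,field}"
  assumes "card (rat_points n c) \<ge> card (proj_space n :: (nat \<Rightarrow> 'a) set set) - 1"
  obtains m where "\<And>x. x \<in> nzvecs n \<Longrightarrow> peval n c x \<noteq> 0 \<Longrightarrow> \<exists>s. x = (\<lambda>i. s * m i)"
proof -
  define B where "B = proj_space n - rat_points n c"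
  have "card B = card (proj_space n :: (nat \<Rightarrow> 'a) set set) - card (rat_points n c)"
    unfolding B_def
    by (rule card_Diff_subset) (auto simp: rat_points_def intro: finite_subset finite_proj_space)
  then have "card B \<le> 1" using assms by linarith
  then have B_single: "M = M'" if "M \<in> B" "M' \<in> B" for M M'
    using that card_le_Suc0_iff_eq[of B] finite_proj_space by (auto simp: B_def)
  have class_in_B: "proj_rel n `` {x} \<in> B" if "x \<in> nzvecs n" "peval n c x \<noteq> 0" for x
  proof -
    have "proj_rel n `` {x} \<notin> rat_points n c"
      using self_in_proj_class[OF that(1)] that(2) unfolding rat_points_def by blast
    then show ?thesis using proj_class_in_proj_space[OF that(1)] by (simp add: B_def)
  qed
  show thesis
  proof (cases "B = {}")
    case True
    then show ?thesis using class_in_B that by blast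
  next
    case False
    then obtain M where "M \<in> B" by blast
    then obtain m where "m \<in> nzvecs n" "M = proj_rel n `` {m}"
      by (auto simp: B_def elim: proj_space_elemE)
    show ?thesis
    proof (rule that[of m])
      fix x assume "x \<in> nzvecs n" "peval n c x \<noteq> 0"
      then have "m \<in> proj_rel n `` {x}"
        using B_single[OF class_in_B \<open>M \<in> B\<close>] \<open>M = _\<close> self_in_proj_class[OF \<open>m \<in> nzvecs n\<close>] by simp
      then obtain t where "t \<noteq> 0" "m = (\<lambda>i. t * x i)" by (auto simp: proj_rel_def)
      then have "x = (\<lambda>i. inverse t * m i)" by (simp add: fun_eq_iff)
      then show "\<exists>s. x = (\<lambda>i. s * m i)" by blast
    qed
  qed
qed

definition span2 :: "(nat \<Rightarrow> 'a) \<Rightarrow> (nat \<Rightarrow> 'a) \<Rightarrow> (nat \<Rightarrow> 'a::field) set" where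
  "span2 p m = (\<lambda>(a, b). \<lambda>i. a * p i + b * m i) ` UNIV"

lemma span2_memI: "(\<lambda>i. a * p i + b * m i) \<in> span2 p m"
  unfolding span2_def by (rule image_eqI[where x = "(a, b)"]) simp_all

lemma left_in_span2: "p \<in> span2 p m"
  using span2_memI[of 1 p 0 m] by simp

lemma zero_in_span2: "(\<lambda>_. 0) \<in> span2 p m"
  using span2_memI[of 0 p 0 m] by simp

lemma card_span2_le: "card (span2 p m :: (nat \<Rightarrow> 'a::{finite,field}) set) \<le> card (UNIV :: 'a set) ^ 2"
proof -
  have "card (span2 p m) \<le> card (UNIV :: ('a \<times> 'a) set)"
    unfolding span2_def by (rule card_image_le) simp
  also have "\<dots> = card (UNIV :: 'a set) * card (UNIV :: 'a set)"
    unfolding UNIV_Times_UNIV[symmetric] by (rule card_cartesian_product)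
  finally show ?thesis
    by (simp add: power2_eq_square)
qed

lemma add_mult_notin_span2:
  assumes "y \<in> span2 p m" "x \<notin> span2 p m" "t \<noteq> 0"
  shows "(\<lambda>i. y i + t * x i) \<notin> span2 p m"
proof
  assume "(\<lambda>i. y i + t * x i) \<in> span2 p m"
  with assms(1) obtain a b a' b' where
    y: "y = (\<lambda>i. a * p i + b * m i)" and
    yx: "(\<lambda>i. y i + t * x i) = (\<lambda>i. a' * p i + b' * m i)"
    by (auto simp: span2_def)
  have "x i = ((a' - a) * p i + (b' - b) * m i) / t" for i
  proof -
    have "t * x i = (a' - a) * p i + (b' - b) * m i"
      using fun_cong[OF yx, of i] unfolding y by (simp add: algebra_simps)
    with assms(3) show ?thesis by (simp add: eq_divide_eq mult.commute)
  qed
  then have "x = (\<lambda>i. (a' - a) / t * p i + (b' - b) / t * m i)"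
    by (simp add: fun_eq_iff add_divide_distrib)
  then have "x \<in> span2 p m"
    by (simp only: span2_memI)
  with assms(2) show False by blast
qed

lemma peval_eq_0_off_span2E:
  fixes c :: "(nat \<Rightarrow> nat) \<Rightarrow> 'a::{finite,field}"
  assumes "card (rat_points n c) \<ge> card (proj_space n :: (nat \<Rightarrow> 'a) set set) - 1"
  obtains m where "\<And>x. x \<in> vecs n \<Longrightarrow> x \<notin> span2 p m \<Longrightarrow> peval n c x = 0"
proof -
  obtain m where m: "\<And>x. x \<in> nzvecs n \<Longrightarrow> peval n c x \<noteq> 0 \<Longrightarrow> \<exists>s. x = (\<lambda>i. s * m i)"
    using nonvanishing_vecs_are_multiples[OF assms] by blast
  show thesis
  proof (rule that)
    fix x assume x: "x \<in> vecs n" "x \<notin> span2 p m"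
    show "peval n c x = 0"
    proof (rule ccontr)
      assume "peval n c x \<noteq> 0"
      moreover have "x \<in> nzvecs n"
        using x zero_in_span2 by (auto simp: nzvecs_eq)
      ultimately obtain s where "x = (\<lambda>i. s * m i)" using m by blast
      then have "x \<in> span2 p m" using span2_memI[of 0 p s m] by simp
      with x(2) show False ..
    qed
  qed
qed

lemma exists_vec_notin_span2:
  fixes p m :: "nat \<Rightarrow> 'a::{finite,field}"
  assumes "n \<ge> 2"
  obtains u where "u \<in> vecs n" "u \<notin> span2 p m"
proof -
  have "card {0, 1 :: 'a} \<le> card (UNIV :: 'a set)"
    by (rule card_mono) simp_all
  then have "2 \<le> card (UNIV :: 'a set)" by simp
  have "card (span2 p m) \<le> card (UNIV :: 'a set) ^ 2"
    by (rule card_span2_le)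
  also have "\<dots> < card (UNIV :: 'a set) ^ Suc n"
    using \<open>2 \<le> card (UNIV :: 'a set)\<close> assms by (intro power_strict_increasing) simp_all
  also have "\<dots> = card (vecs n :: (nat \<Rightarrow> 'a) set)"
    by (rule card_vecs[symmetric])
  finally have "card (span2 p m) < card (vecs n :: (nat \<Rightarrow> 'a) set)" .
  moreover have "finite (span2 p m)"
    unfolding span2_def by simp
  ultimately have "\<not> vecs n \<subseteq> span2 p m"
    using card_mono leD by blast
  with that show thesis by blast
qed

lemma exists_direction_off_span2:
  fixes p m w :: "nat \<Rightarrow> 'a::{finite,field}"
  assumes "n \<ge> 2" "j \<le> n" "w j \<noteq> 0"
  obtains v where "v \<in> vecs n" "v \<notin> span2 p m" "(\<Sum>i\<le>n. v i * w i) \<noteq> 0"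
proof -
  obtain u where u: "u \<in> vecs n" "u \<notin> span2 p m"
    using exists_vec_notin_span2[OF assms(1)] .
  define e where "e i = (if i = j then 1 else 0 :: 'a)" for i
  have "e \<in> vecs n"
    using assms(2) by (simp add: e_def vecs_def)
  have "(\<Sum>i\<le>n. e i * w i) = (\<Sum>i\<le>n. if i = j then w j else 0)"
    by (rule sum.cong) (simp_all add: e_def)
  also have "\<dots> = w j"
    using assms(2) by simp
  finally have "(\<Sum>i\<le>n. e i * w i) = w j" .
  consider "(\<Sum>i\<le>n. u i * w i) \<noteq> 0" | "e \<notin> span2 p m"
    | "(\<Sum>i\<le>n. u i * w i) = 0" "e \<in> span2 p m" by blast
  then show thesis
  proof cases
    case 1
    with u that show ?thesis by blast
  next
    case 2
    with \<open>e \<in> vecs n\<close> \<open>(\<Sum>i\<le>n. e i * w i) = w j\<close> assms(3) that show ?thesis by auto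
  next
    case 3
    have "(\<lambda>i. e i + u i) \<notin> span2 p m"
      using add_mult_notin_span2[OF 3(2) u(2), of 1] by simp
    moreover have "(\<Sum>i\<le>n. (e i + u i) * w i) = w j"
      using 3(1) \<open>(\<Sum>i\<le>n. e i * w i) = w j\<close> by (simp add: distrib_right sum.distrib)
    moreover have "(\<lambda>i. e i + u i) \<in> vecs n"
      using \<open>e \<in> vecs n\<close> u(1) by (simp add: vecs_def)
    ultimately show ?thesis using assms(3) that[of "\<lambda>i. e i + u i"] by simp
  qed
qed

theorem lemma2p7:
  fixes c :: "(nat \<Rightarrow> nat) \<Rightarrow> 'a::{finite,field}" and n d :: nat
  assumes "n \<ge> 2"
    and "hypersurface n d c"
    and "\<exists>P\<in>rat_points n c. smooth_at n c P"
    and "card (rat_points n c) \<ge> card (proj_space n :: (nat \<Rightarrow> 'a) set set) - 1"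
  shows "d \<ge> card (UNIV :: 'a set) + 1"
proof -
  obtain P where "P \<in> rat_points n c" "smooth_at n c P"
    using assms(3) by blast
  then obtain p j where p: "p \<in> nzvecs n" "peval n c p = 0"
    and j: "j \<le> n" "peval n (pderiv_var j c) p \<noteq> 0"
    by (rule smooth_rat_pointE)
  obtain m where vanish: "\<And>x. x \<in> vecs n \<Longrightarrow> x \<notin> span2 p m \<Longrightarrow> peval n c x = 0"
    using peval_eq_0_off_span2E[where p = p, OF assms(4)] by blast
  obtain v where v: "v \<in> vecs n" "v \<notin> span2 p m"
    "(\<Sum>i\<le>n. v i * peval n (pderiv_var i c) p) \<noteq> 0"
    using exists_direction_off_span2[where w = "\<lambda>i. peval n (pderiv_var i c) p", OF assms(1) j]
    by blast
  have "peval n c (\<lambda>i. p i + t * v i) = 0" for t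
  proof (cases "t = 0")
    case False
    have "(\<lambda>i. p i + t * v i) \<in> vecs n"
      using p(1) v(1) by (simp add: nzvecs_eq vecs_def)
    then show ?thesis
      using vanish add_mult_notin_span2[OF left_in_span2 v(2) False] by blast
  qed (simp add: p(2))
  then show ?thesis
    using degree_gt_card_if_line_on_hypersurface[OF assms(2) v(3) vanish[OF v(1,2)]] by blast
qed

end
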